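(* Let $f:\mathbb{R}^2\times\mathbb{R}\to\mathbb{R}$ be continuously differentiable, and let $(a,b)\in\mathbb{R}^2\times\mathbb{R}$ satisfy $f(a,b)=0$ and $\partial_y f(a,b)\neq 0$. Let $U\subset\mathbb{R}^2$ be a closed rectangle (sides parallel to the coordinate axes) containing $a$ and $V\subset\mathbb{R}$ a closed bounded interval containing $b$, and let $g:U\to V$ be a function such that $f(x,g(x))=0$ for all $x\in U$. Assume that for each $x\in U$ the function $y\mapsto \mathrm{sign}(f(x,y))$ on $V$ is a single-step function, and that the constant $\rho\in\{1,-1\}$ is defined by: $\rho=1$ if these step functions are increasing in $y$, and $\rho=-1$ if they are decreasing (this is the same for all $x\in U$). For a subrectangle $R\subseteq U$ define $$\mu(R)=\int_{R\times V}\Theta(f(x,y))\,dx\,dy,$$ where $\Theta(t)=1$ for $t\ge 0$ and $\Theta(t)=0$ for $t<0$, and $dx\,dy$ is Lebesgue measure. Then for every subrectangle $R$ of $U$, $$\int_R g\,dx=|R|\,(\max V)^{\frac{\rho+1}{2}}(\min V)^{\frac{1-\rho}{2}}-\rho\,\mu(R),$$ where $|R|$ denotes the area of $R$ (and a factor raised to the exponent $0$ is read as $1$).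
   Context: All rectangles are parallel to the coordinate axes. The existence of $U$, $V$ and a unique continuously differentiable $g:U\to V$ with $f(x,g(x))=0$ is provided by the implicit function theorem; $f$ is regarded on $U\times V$. *)

theory Defs
  imports "HOL-Analysis.Analysis"
begin

definition Theta :: "real \<Rightarrow> real" where
  "Theta t = (if t \<ge> 0 then 1 else 0)"

definition single_step_on :: "real set \<Rightarrow> (real \<Rightarrow> real) \<Rightarrow> bool" where
  "single_step_on V h \<longleftrightarrow>
     (\<exists>t\<in>V. \<exists>u v. u \<noteq> v \<and> (\<forall>y\<in>V. y < t \<longrightarrow> h y = u) \<and> (\<forall>y\<in>V. t < y \<longrightarrow> h y = v))"

end

theory Submission
  imports Defs
begin

(* Integrating Theta (f z) over R \<times> V gives the area of the part of R \<times> V where f \<ge> 0.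
  As the sign of f (x, -) changes monotonically and only at the root g x, the fibre of this
  region over x is the interval [g x, max V] (rho = 1) or [min V, g x] (rho = -1), so by
  Fubini mu(R) is the integral over R of max V - g resp. g - min V.
  Besides continuity of f (for measurability) only the uniqueness of the root in V and the
  monotonicity of the sign are used. *)

lemma measure_lborel_eq_integral_fibres:
  fixes S :: "('a::euclidean_space \<times> 'b::euclidean_space) set"
  assumes S: "S \<in> sets lborel" and fin: "emeasure lborel S < \<infinity>"
  shows "integrable lborel (\<lambda>x. measure lborel (Pair x -` S))"
    and "measure lborel S = (\<integral>x. measure lborel (Pair x -` S) \<partial>lborel)"
proof -
  have int: "integrable (lborel \<Otimes>\<^sub>M lborel) (indicator S :: _ \<Rightarrow> real)"
    unfolding lborel_prod using S fin by (simp add: integrable_indicator_iff)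
  have fibre: "(\<integral>y. indicator S (x, y) \<partial>lborel) = measure lborel (Pair x -` S)" for x
  proof -
    have "(\<lambda>y. indicator S (x, y) :: real) = indicator (Pair x -` S)"
      by (simp add: indicator_def fun_eq_iff)
    then show ?thesis by simp
  qed
  show "integrable lborel (\<lambda>x. measure lborel (Pair x -` S))"
    using lborel_pair.integrable_fst'[OF int] unfolding fibre .
  show "measure lborel S = (\<integral>x. measure lborel (Pair x -` S) \<partial>lborel)"
    using lborel_pair.integral_fst'[OF int] unfolding fibre lborel_prod by simp
qed

lemma measure_Sigma_interval_eq_set_integral:
  fixes l h :: "'a::euclidean_space \<Rightarrow> real"
  assumes R: "R \<in> sets lborel" "emeasure lborel R < \<infinity>"
    and S: "(SIGMA x:R. {l x..h x}) \<in> sets lborel"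
    and lh: "\<forall>x\<in>R. c \<le> l x \<and> l x \<le> h x \<and> h x \<le> d"
  shows "set_integrable lborel R (\<lambda>x. h x - l x)"
    and "measure lborel (SIGMA x:R. {l x..h x}) = (LINT x:R|lborel. h x - l x)"
proof -
  let ?S = "SIGMA x:R. {l x..h x}"
  have "emeasure lborel ?S \<le> emeasure lborel (R \<times> {c..d})"
    using lh R(1) by (intro emeasure_mono) (auto simp flip: lborel_prod)
  also have "\<dots> = emeasure lborel R * emeasure lborel {c..d}"
    using R(1) by (metis atLeastAtMost_borel lborel.emeasure_pair_measure_Times lborel_prod sets_lborel)
  also have "\<dots> < \<infinity>"
    using R(2) by (simp add: ennreal_mult_less_top emeasure_lborel_Icc_eq)
  finally have fin: "emeasure lborel ?S < \<infinity>" .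
  have fibre: "measure lborel (Pair x -` ?S) = indicator R x *\<^sub>R (h x - l x)" for x
  proof -
    have "Pair x -` ?S = (if x \<in> R then {l x..h x} else {})"
      by auto
    then show ?thesis
      using lh by (simp add: indicator_def)
  qed
  show "set_integrable lborel R (\<lambda>x. h x - l x)"
    using measure_lborel_eq_integral_fibres(1)[OF S fin]
    unfolding set_integrable_def fibre .
  show "measure lborel ?S = (LINT x:R|lborel. h x - l x)"
    using measure_lborel_eq_integral_fibres(2)[OF S fin]
    unfolding set_lebesgue_integral_def fibre .
qed

lemma set_integral_Theta_eq_measure:
  "(LINT z:A|lborel. Theta (h z)) = measure lborel (A \<inter> {z. 0 \<le> h z})"
proof -
  have "(\<lambda>z. indicator A z *\<^sub>R Theta (h z)) = indicator (A \<inter> {z. 0 \<le> h z})"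
    by (auto simp: Theta_def indicator_def fun_eq_iff)
  then show ?thesis
    unfolding set_lebesgue_integral_def by simp
qed

lemma sgn_mono_nonneg_iff:
  fixes h :: "real \<Rightarrow> real"
  assumes mono: "monotone_on V (\<le>) (\<le>) (\<lambda>y. sgn (h y))"
    and y0: "y0 \<in> V" "h y0 = 0" and unique: "\<forall>y\<in>V. h y = 0 \<longrightarrow> y = y0"
    and y: "y \<in> V"
  shows "0 \<le> h y \<longleftrightarrow> y0 \<le> y"
proof (cases "y = y0")
  case False
  then have "h y \<noteq> 0"
    using unique y by auto
  moreover have "y < y0 \<Longrightarrow> sgn (h y) \<le> 0" and "y0 < y \<Longrightarrow> 0 \<le> sgn (h y)"
    using mono y0 y unfolding monotone_on_def by (metis less_imp_le sgn_zero)+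
  ultimately show ?thesis
    using False by (cases "y < y0") (auto simp: sgn_if split: if_splits)
qed (use y0 in simp)

lemma sgn_antimono_nonneg_iff:
  fixes h :: "real \<Rightarrow> real"
  assumes antimono: "monotone_on V (\<le>) (\<ge>) (\<lambda>y. sgn (h y))"
    and y0: "y0 \<in> V" "h y0 = 0" and unique: "\<forall>y\<in>V. h y = 0 \<longrightarrow> y = y0"
    and y: "y \<in> V"
  shows "0 \<le> h y \<longleftrightarrow> y \<le> y0"
proof (cases "y = y0")
  case False
  then have "h y \<noteq> 0"
    using unique y by auto
  moreover have "y < y0 \<Longrightarrow> 0 \<le> sgn (h y)" and "y0 < y \<Longrightarrow> sgn (h y) \<le> 0"
    using antimono y0 y unfolding monotone_on_def by (metis less_imp_le sgn_zero)+
  ultimately show ?thesis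
    using False by (cases "y < y0") (auto simp: sgn_if split: if_splits)
qed (use y0 in simp)

lemma set_integral_eq_measure_minus_epigraph:
  fixes g :: "'a::euclidean_space \<Rightarrow> real"
  assumes R: "R \<in> sets lborel" "emeasure lborel R < \<infinity>"
    and epi: "(SIGMA x:R. {g x..d}) \<in> sets lborel"
    and g: "\<forall>x\<in>R. c \<le> g x \<and> g x \<le> d"
  shows "(LINT x:R|lborel. g x) = measure lborel R * d - measure lborel (SIGMA x:R. {g x..d})"
proof -
  note fibres = measure_Sigma_interval_eq_set_integral[OF R epi, of c d]
  have "(LINT x:R|lborel. g x) = (LINT x:R|lborel. d - (d - g x))"
    by simp
  also have "\<dots> = (LINT x:R|lborel. d) - (LINT x:R|lborel. d - g x)"
    using R g fibres(1) by (intro set_integral_diff(2)) (auto simp: set_integrable_def)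
  also have "\<dots> = measure lborel R * d - measure lborel (SIGMA x:R. {g x..d})"
    using R g fibres(2) by (simp add: set_integral_const)
  finally show ?thesis .
qed

lemma set_integral_eq_measure_plus_hypograph:
  fixes g :: "'a::euclidean_space \<Rightarrow> real"
  assumes R: "R \<in> sets lborel" "emeasure lborel R < \<infinity>"
    and hypo: "(SIGMA x:R. {c..g x}) \<in> sets lborel"
    and g: "\<forall>x\<in>R. c \<le> g x \<and> g x \<le> d"
  shows "(LINT x:R|lborel. g x) = measure lborel R * c + measure lborel (SIGMA x:R. {c..g x})"
proof -
  note fibres = measure_Sigma_interval_eq_set_integral[OF R hypo, of c d]
  have "(LINT x:R|lborel. g x) = (LINT x:R|lborel. c + (g x - c))"
    by simp
  also have "\<dots> = (LINT x:R|lborel. c) + (LINT x:R|lborel. g x - c)"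
    using R g fibres(1) by (intro set_integral_add(2)) (auto simp: set_integrable_def)
  also have "\<dots> = measure lborel R * c + measure lborel (SIGMA x:R. {c..g x})"
    using R g fibres(2) by (simp add: set_integral_const)
  finally show ?thesis .
qed

lemma nonneg_part_eq_epigraph_of_zero:
  fixes f :: "'a \<times> real \<Rightarrow> real"
  assumes mono: "\<forall>x\<in>R. monotone_on {c..d} (\<le>) (\<le>) (\<lambda>y. sgn (f (x, y)))"
    and zero: "\<forall>x\<in>R. g x \<in> {c..d} \<and> f (x, g x) = 0"
    and unique: "\<forall>x\<in>R. \<forall>y\<in>{c..d}. f (x, y) = 0 \<longrightarrow> y = g x"
  shows "(R \<times> {c..d}) \<inter> {z. 0 \<le> f z} = (SIGMA x:R. {g x..d})"
proof -
  have "0 \<le> f (x, y) \<longleftrightarrow> g x \<le> y" if "x \<in> R" "y \<in> {c..d}" for x y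
  proof (rule sgn_mono_nonneg_iff[where h = "\<lambda>y. f (x, y)"])
    show "monotone_on {c..d} (\<le>) (\<le>) (\<lambda>y. sgn (f (x, y)))"
      using mono that(1) by blast
    show "g x \<in> {c..d}" "f (x, g x) = 0"
      using zero that(1) by auto
    show "\<forall>y\<in>{c..d}. f (x, y) = 0 \<longrightarrow> y = g x"
      using unique that(1) by blast
  qed (fact that(2))
  then show ?thesis
    using zero by auto
qed

lemma nonneg_part_eq_hypograph_of_zero:
  fixes f :: "'a \<times> real \<Rightarrow> real"
  assumes antimono: "\<forall>x\<in>R. monotone_on {c..d} (\<le>) (\<ge>) (\<lambda>y. sgn (f (x, y)))"
    and zero: "\<forall>x\<in>R. g x \<in> {c..d} \<and> f (x, g x) = 0"
    and unique: "\<forall>x\<in>R. \<forall>y\<in>{c..d}. f (x, y) = 0 \<longrightarrow> y = g x"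
  shows "(R \<times> {c..d}) \<inter> {z. 0 \<le> f z} = (SIGMA x:R. {c..g x})"
proof -
  have "0 \<le> f (x, y) \<longleftrightarrow> y \<le> g x" if "x \<in> R" "y \<in> {c..d}" for x y
  proof (rule sgn_antimono_nonneg_iff[where h = "\<lambda>y. f (x, y)"])
    show "monotone_on {c..d} (\<le>) (\<ge>) (\<lambda>y. sgn (f (x, y)))"
      using antimono that(1) by blast
    show "g x \<in> {c..d}" "f (x, g x) = 0"
      using zero that(1) by auto
    show "\<forall>y\<in>{c..d}. f (x, y) = 0 \<longrightarrow> y = g x"
      using unique that(1) by blast
  qed (fact that(2))
  then show ?thesis
    using zero by auto
qed

lemma set_integral_implicit_root_mono:
  fixes f :: "'a::euclidean_space \<times> real \<Rightarrow> real"
  assumes R: "R \<in> sets lborel" "emeasure lborel R < \<infinity>"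
    and meas: "(R \<times> {c..d}) \<inter> {z. 0 \<le> f z} \<in> sets lborel"
    and mono: "\<forall>x\<in>R. monotone_on {c..d} (\<le>) (\<le>) (\<lambda>y. sgn (f (x, y)))"
    and zero: "\<forall>x\<in>R. g x \<in> {c..d} \<and> f (x, g x) = 0"
    and unique: "\<forall>x\<in>R. \<forall>y\<in>{c..d}. f (x, y) = 0 \<longrightarrow> y = g x"
  shows "(LINT x:R|lborel. g x) = measure lborel R * d - (LINT z:(R \<times> {c..d})|lborel. Theta (f z))"
proof -
  have "(R \<times> {c..d}) \<inter> {z. 0 \<le> f z} = (SIGMA x:R. {g x..d})"
    by (rule nonneg_part_eq_epigraph_of_zero[OF mono zero unique])
  then show ?thesis
    using set_integral_eq_measure_minus_epigraph[OF R, of g d c] meas zero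
    by (simp add: set_integral_Theta_eq_measure)
qed

lemma set_integral_implicit_root_antimono:
  fixes f :: "'a::euclidean_space \<times> real \<Rightarrow> real"
  assumes R: "R \<in> sets lborel" "emeasure lborel R < \<infinity>"
    and meas: "(R \<times> {c..d}) \<inter> {z. 0 \<le> f z} \<in> sets lborel"
    and antimono: "\<forall>x\<in>R. monotone_on {c..d} (\<le>) (\<ge>) (\<lambda>y. sgn (f (x, y)))"
    and zero: "\<forall>x\<in>R. g x \<in> {c..d} \<and> f (x, g x) = 0"
    and unique: "\<forall>x\<in>R. \<forall>y\<in>{c..d}. f (x, y) = 0 \<longrightarrow> y = g x"
  shows "(LINT x:R|lborel. g x) = measure lborel R * c + (LINT z:(R \<times> {c..d})|lborel. Theta (f z))"
proof -
  have "(R \<times> {c..d}) \<inter> {z. 0 \<le> f z} = (SIGMA x:R. {c..g x})"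
    by (rule nonneg_part_eq_hypograph_of_zero[OF antimono zero unique])
  then show ?thesis
    using set_integral_eq_measure_plus_hypograph[OF R, of c g d] meas zero
    by (simp add: set_integral_Theta_eq_measure)
qed

theorem lemma1:
  fixes f :: "(real \<times> real) \<times> real \<Rightarrow> real"
    and a :: "real \<times> real" and b :: real
    and u1 u2 v1 v2 c d :: real
    and g :: "real \<times> real \<Rightarrow> real"
    and \<rho> :: int
  assumes C1: "\<exists>f'. (\<forall>z. (f has_derivative blinfun_apply (f' z)) (at z)) \<and> continuous_on UNIV f'"
    and zero: "f (a, b) = 0"
    and partial: "deriv (\<lambda>y. f (a, y)) b \<noteq> 0"
    and U: "U = {u1..u2} \<times> {v1..v2}" and aU: "a \<in> U"
    and V: "V = {c..d}" and bV: "b \<in> V"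
    and gUV: "\<forall>x\<in>U. g x \<in> V"
    and groot: "\<forall>x\<in>U. f (x, g x) = 0"
    and guniq: "\<forall>x\<in>U. \<forall>y\<in>V. f (x, y) = 0 \<longrightarrow> y = g x"
    and step: "\<forall>x\<in>U. single_step_on V (\<lambda>y. sgn (f (x, y)))"
    and rho: "\<rho> \<in> {1, -1}"
    and incr: "\<rho> = 1 \<Longrightarrow> \<forall>x\<in>U. monotone_on V (\<le>) (\<le>) (\<lambda>y. sgn (f (x, y)))"
    and decr: "\<rho> = -1 \<Longrightarrow> \<forall>x\<in>U. monotone_on V (\<le>) (\<ge>) (\<lambda>y. sgn (f (x, y)))"
    and R: "R = {r1..r2} \<times> {s1..s2}" and RU: "R \<subseteq> U"
  shows "(LINT x:R|lborel. g x) =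
           measure lborel R * d ^ nat ((\<rho> + 1) div 2) * c ^ nat ((1 - \<rho>) div 2)
           - of_int \<rho> * (LINT z:(R \<times> V)|lborel. Theta (f z))"
proof -
  have "continuous_on UNIV f"
    using C1 by (metis continuous_at_imp_continuous_on has_derivative_continuous)
  then have "closed ((R \<times> {c..d}) \<inter> {z. 0 \<le> f z})"
    unfolding R by (intro closed_Int closed_Times closed_atLeastAtMost closed_Collect_le continuous_on_const)
  then have meas: "(R \<times> {c..d}) \<inter> {z. 0 \<le> f z} \<in> sets lborel"
    by simp
  have "compact R"
    unfolding R by (intro compact_Times compact_Icc)
  then have R_meas: "R \<in> sets lborel" and R_fin: "emeasure lborel R < \<infinity>"
    by (simp add: borel_compact, rule emeasure_compact_finite)
  have zero: "\<forall>x\<in>R. g x \<in> {c..d} \<and> f (x, g x) = 0"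
    and unique: "\<forall>x\<in>R. \<forall>y\<in>{c..d}. f (x, y) = 0 \<longrightarrow> y = g x"
    using RU gUV groot guniq V by auto
  from rho consider "\<rho> = 1" | "\<rho> = -1"
    by auto
  then show ?thesis
  proof cases
    case 1
    have "\<forall>x\<in>R. monotone_on {c..d} (\<le>) (\<le>) (\<lambda>y. sgn (f (x, y)))"
      using incr[OF 1] RU unfolding V by (meson subsetD)
    with 1 show ?thesis
      using set_integral_implicit_root_mono[OF R_meas R_fin meas _ zero unique] V by simp
  next
    case 2
    have "\<forall>x\<in>R. monotone_on {c..d} (\<le>) (\<ge>) (\<lambda>y. sgn (f (x, y)))"
      using decr[OF 2] RU unfolding V by (meson subsetD)
    with 2 show ?thesis
      using set_integral_implicit_root_antimono[OF R_meas R_fin meas _ zero unique] V by simp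
  qed
qed

end
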